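(* The modified multiplicative price update algorithm is a truthful mechanism without money and with verification for CAs with unknown $k$-minded bidders and goods of supply $b$; it outputs an allocation in which each good is allocated at most $b$ times, and its approximation ratio is $O(b\, m^{1/b})$.
   Context: Multi-unit combinatorial auction: a set $\mathsf U$ of $m$ goods, each with supply $b\ge1$; $n$ bidders. True type of bidder $i$: $t_i=(v_i,\mathcal S_i)$ with $\mathcal S_i$ a private collection of $k$ nonempty subsets of $\mathsf U$ and $v_i:\mathcal S_i\to\mathbb R_{\ge0}$ private, extended by $v_i(T)=\max\{v_i(S'):S'\in\mathcal S_i,S'\subseteq T\}$ ($0$ if none). Declarations $(w,\mathcal W)$ have the same form. Modified multiplicative price update algorithm on declarations $(w_i,\mathcal W_i)$: let $v^i_{\max}=\max_{S\in\mathcal W_i}w_i(S)$; let $j$ be the bidder with largest $v^j_{\max}$ (smallest index on ties); set $\mu=(1+\epsilon)v^j_{\max}$ for a fixed $0<\epsilon\ll1$, $p_0=\mu/(4bm)$, $r=(4bm)^{1/b}$, and initial prices $p_e=p_0$; process bidders in the order $j,1,2,\dots,j-1,j+1,\dots,n$; when processing bidder $i$, let $S_i$ maximize $w_i(S)$ over $S\in\mathcal W_i$ with $w_i(S)\ge\sum_{e\in S}p_e$ (current prices; $S_i=\emptyset$ if none), allocate $S_i$ to $i$, and multiply $p_e$ by $r$ for every $e\in S_i$. Verification: bidder $i$ with true type $t_i$ facing $\mathbf b_{-i}$ may declare $b_i=(z,\mathcal T)$ only if $z(A_i(b_i,\mathbf b_{-i}))\le v_i(A_i(b_i,\mathbf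 b_{-i}))$. Truthful without money and with verification: for all $i$, $\mathbf b_{-i}$, true types $t_i$ and declarations $b_i$ permitted by verification, $v_i(A_i(t_i,\mathbf b_{-i}))\ge v_i(A_i(b_i,\mathbf b_{-i}))$. Approximation ratio $\alpha$: on every truthful input, the social welfare $\sum_i v_i(A_i)$ is at least $\mathrm{OPT}/\alpha$, where $\mathrm{OPT}$ is the maximum social welfare over allocations assigning each good at most $b$ times. *)

theory Defs
  imports Complex_Main
begin

text \<open>A declaration (or true type) is a pair (w, W): a valuation on sets of goods
 (only its values on W are meaningful) and a collection W of demanded sets.\<close>
type_synonym 'g decl = "('g set \<Rightarrow> real) \<times> 'g set set"

definition valid_decl :: "'g set \<Rightarrow> nat \<Rightarrow> 'g decl \<Rightarrow> bool" where
  "valid_decl U k d \<longleftrightarrow> finite (snd d) \<and> card (snd d) = k \<and>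
     (\<forall>S\<in>snd d. S \<noteq> {} \<and> S \<subseteq> U \<and> fst d S \<ge> 0)"

definition ext_val :: "'g decl \<Rightarrow> 'g set \<Rightarrow> real" where
  "ext_val d T = (if \<exists>S\<in>snd d. S \<subseteq> T
                  then Max {fst d S | S. S \<in> snd d \<and> S \<subseteq> T} else 0)"

definition vmax :: "'g decl \<Rightarrow> real" where
  "vmax d = (if snd d = {} then 0 else Max (fst d ` snd d))"

definition leader :: "nat \<Rightarrow> (nat \<Rightarrow> 'g decl) \<Rightarrow> nat" where
  "leader n d = (LEAST j. j < n \<and> (\<forall>i<n. vmax (d i) \<le> vmax (d j)))"

definition proc_order :: "nat \<Rightarrow> nat \<Rightarrow> nat list" where
  "proc_order n j = j # filter (\<lambda>i. i \<noteq> j) [0..<n]"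

definition choose_set :: "'g decl \<Rightarrow> ('g \<Rightarrow> real) \<Rightarrow> 'g set" where
  "choose_set d p = (let F = {S \<in> snd d. fst d S \<ge> (\<Sum>e\<in>S. p e)} in
     if F = {} then {} else (SOME S. S \<in> F \<and> (\<forall>S'\<in>F. fst d S' \<le> fst d S)))"

definition mpu_step :: "(nat \<Rightarrow> 'g decl) \<Rightarrow> real \<Rightarrow> nat
      \<Rightarrow> ('g \<Rightarrow> real) \<times> (nat \<Rightarrow> 'g set) \<Rightarrow> ('g \<Rightarrow> real) \<times> (nat \<Rightarrow> 'g set)" where
  "mpu_step d r i st = (let S = choose_set (d i) (fst st) in
     ((\<lambda>e. if e \<in> S then r * fst st e else fst st e), (snd st)(i := S)))"

definition mpu :: "'g set \<Rightarrow> nat \<Rightarrow> real \<Rightarrow> nat \<Rightarrow> (nat \<Rightarrow> 'g decl) \<Rightarrow> nat \<Rightarrow> 'g set" where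
  "mpu U b eps n d = (let j = leader n d;
       m = real (card U);
       mu = (1 + eps) * vmax (d j);
       p0 = mu / (4 * real b * m);
       r = (4 * real b * m) powr (1 / real b)
     in snd (fold (mpu_step d r) (proc_order n j) (\<lambda>_. p0, \<lambda>_. {})))"

definition truthful_verif :: "'g set \<Rightarrow> nat \<Rightarrow> nat \<Rightarrow>
      ((nat \<Rightarrow> 'g decl) \<Rightarrow> nat \<Rightarrow> 'g set) \<Rightarrow> bool" where
  "truthful_verif U k n A \<longleftrightarrow>
     (\<forall>i<n. \<forall>d t. (\<forall>j<n. valid_decl U k (d j)) \<longrightarrow> valid_decl U k t \<longrightarrow>
        ext_val (d i) (A d i) \<le> ext_val t (A d i) \<longrightarrow>
        ext_val t (A d i) \<le> ext_val t (A (d(i := t)) i))"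

definition feasible_alloc :: "'g set \<Rightarrow> nat \<Rightarrow> nat \<Rightarrow> (nat \<Rightarrow> 'g set) \<Rightarrow> bool" where
  "feasible_alloc U b n X \<longleftrightarrow> (\<forall>i<n. X i \<subseteq> U) \<and> (\<forall>e. card {i. i < n \<and> e \<in> X i} \<le> b)"

definition welfare :: "nat \<Rightarrow> (nat \<Rightarrow> 'g decl) \<Rightarrow> (nat \<Rightarrow> 'g set) \<Rightarrow> real" where
  "welfare n t X = (\<Sum>i<n. ext_val (t i) (X i))"

end

theory Submission
  imports Defs
begin

text \<open>
  Truthfulness: the leader is offered all goods at the base price, so it obtains a set worth
  its maximal value; a raise of the leader's declaration keeps it the leader, and any other
  bidder faces prices that only depend on the bidders processed before it.  At fixed prices,
  a demand that passes verification can only be improved by telling the truth: every true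
  set inside the chosen set is cheaper than the chosen set and hence affordable.

  Feasibility: the price of a good allocated \<open>c\<close> times is \<open>p\<^sub>0 r\<^sup>c\<close>, and \<open>p\<^sub>0 r\<^sup>b = \<mu>\<close> exceeds
  every declared value, so a good allocated \<open>b\<close> times is never affordable again.

  Approximation: every bidder either gets at least the value of its optimal set or that set
  costs more than its value at the final prices; summing, and using that each good occurs
  at most \<open>b\<close> times in the optimum, \<open>OPT \<le> ALG + b P\<close> with \<open>P\<close> the final total price.  Each
  allocation raises the total price by \<open>r - 1\<close> times the price paid, which is at most the
  value obtained, so \<open>P \<le> P\<^sub>0 + (r - 1) ALG\<close>; the initial total price is small compared with
  the leader's value, and \<open>r \<le> 4 m\<^bsup>1/b\<^esub>\<close>.
\<close>

section \<open>Extended valuations\<close>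

lemma ext_val_eq_Max_image:
  "ext_val d T = (if \<exists>S\<in>snd d. S \<subseteq> T then Max (fst d ` {S\<in>snd d. S \<subseteq> T}) else 0)"
  unfolding ext_val_def by (simp add: setcompr_eq_image)

lemma ext_val_nonneg: assumes "valid_decl U k d" shows "0 \<le> ext_val d T"
proof (cases "\<exists>S\<in>snd d. S \<subseteq> T")
  case True
  then obtain S where S: "S \<in> snd d" "S \<subseteq> T" by blast
  have "finite (fst d ` {S\<in>snd d. S \<subseteq> T})" using assms unfolding valid_decl_def by simp
  then have "fst d S \<le> Max (fst d ` {S\<in>snd d. S \<subseteq> T})" using S by (intro Max_ge) auto
  moreover have "0 \<le> fst d S" using assms S unfolding valid_decl_def by auto
  ultimately show ?thesis using True by (simp add: ext_val_eq_Max_image)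
qed (simp add: ext_val_eq_Max_image)

lemma fst_le_ext_val:
  assumes "valid_decl U k d" "S \<in> snd d" "S \<subseteq> T" shows "fst d S \<le> ext_val d T"
proof -
  have "finite (fst d ` {S\<in>snd d. S \<subseteq> T})" using assms unfolding valid_decl_def by simp
  then have "fst d S \<le> Max (fst d ` {S\<in>snd d. S \<subseteq> T})" using assms by (intro Max_ge) auto
  then show ?thesis using assms by (auto simp add: ext_val_eq_Max_image)
qed

lemma ext_val_attained:
  assumes "valid_decl U k d" "\<exists>S\<in>snd d. S \<subseteq> T"
  obtains S where "S \<in> snd d" "S \<subseteq> T" "ext_val d T = fst d S"
proof -
  have "finite (fst d ` {S\<in>snd d. S \<subseteq> T})" using assms unfolding valid_decl_def by simp
  then have "Max (fst d ` {S\<in>snd d. S \<subseteq> T}) \<in> fst d ` {S\<in>snd d. S \<subseteq> T}"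
    using assms by (intro Max_in) auto
  then show ?thesis using assms that by (auto simp add: ext_val_eq_Max_image)
qed

lemma fst_le_vmax: "valid_decl U k d \<Longrightarrow> S \<in> snd d \<Longrightarrow> fst d S \<le> vmax d"
  unfolding vmax_def valid_decl_def by (auto intro: Max_ge)

lemma vmax_attained:
  assumes "valid_decl U k d" "1 \<le> k"
  obtains S where "S \<in> snd d" "vmax d = fst d S"
proof -
  have "snd d \<noteq> {}" "finite (snd d)" using assms unfolding valid_decl_def by auto
  then have "Max (fst d ` snd d) \<in> fst d ` snd d" by (intro Max_in) auto
  then show ?thesis using \<open>snd d \<noteq> {}\<close> that unfolding vmax_def by auto
qed

lemma vmax_nonneg: assumes "valid_decl U k d" "1 \<le> k" shows "0 \<le> vmax d"
proof -
  obtain S where "S \<in> snd d" "vmax d = fst d S" using vmax_attained[OF assms] .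
  then show ?thesis using assms(1) unfolding valid_decl_def by auto
qed

lemma ext_val_le_vmax:
  assumes "valid_decl U k d" "1 \<le> k" shows "ext_val d T \<le> vmax d"
proof (cases "\<exists>S\<in>snd d. S \<subseteq> T")
  case True
  then obtain S where "S \<in> snd d" "S \<subseteq> T" "ext_val d T = fst d S" by (rule ext_val_attained[OF assms(1)])
  then show ?thesis using fst_le_vmax[OF assms(1)] by simp
next
  case False
  then show ?thesis using vmax_nonneg[OF assms] by (simp add: ext_val_eq_Max_image)
qed

lemma card_goods_pos: assumes "valid_decl U k d" "1 \<le> k" "finite U" shows "0 < card U"
proof -
  obtain S where "S \<in> snd d" using vmax_attained[OF assms(1,2)] .
  then have "S \<noteq> {}" "S \<subseteq> U" using assms(1) unfolding valid_decl_def by auto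
  then show ?thesis using assms(3) by (auto simp: card_gt_0_iff)
qed

section \<open>Demand at given prices\<close>

lemma choose_set_cases:
  fixes p :: "'g \<Rightarrow> real"
  assumes "valid_decl U k d"
  defines "F \<equiv> {S \<in> snd d. (\<Sum>e\<in>S. p e) \<le> fst d S}"
  obtains "F = {}" "choose_set d p = {}"
        | "choose_set d p \<in> F" "\<forall>S\<in>F. fst d S \<le> fst d (choose_set d p)"
proof (cases "F = {}")
  case True
  then have "choose_set d p = {}" unfolding choose_set_def F_def Let_def by simp
  with True show ?thesis by (rule that(1))
next
  case False
  let ?chosen = "SOME S. S \<in> F \<and> (\<forall>S'\<in>F. fst d S' \<le> fst d S)"
  have "finite F" using assms unfolding valid_decl_def F_def by simp
  then have "Max (fst d ` F) \<in> fst d ` F" using False by (intro Max_in) auto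
  then obtain S where S: "S \<in> F" "fst d S = Max (fst d ` F)" by auto
  then have "\<exists>S. S \<in> F \<and> (\<forall>S'\<in>F. fst d S' \<le> fst d S)" using \<open>finite F\<close> by auto
  then have "?chosen \<in> F \<and> (\<forall>S'\<in>F. fst d S' \<le> fst d ?chosen)" by (rule someI_ex)
  moreover have "choose_set d p = ?chosen"
    using False unfolding choose_set_def Let_def F_def[symmetric] by simp
  ultimately show ?thesis using that(2) by simp
qed

lemma choose_set_subset: assumes "valid_decl U k d" shows "choose_set d p \<subseteq> U"
proof (cases rule: choose_set_cases[OF assms, where p = p])
  case 2
  then show ?thesis using assms unfolding valid_decl_def by blast
qed simp

lemma choose_set_affordable:
  assumes "valid_decl U k d" "choose_set d p \<noteq> {}"
  shows "choose_set d p \<in> snd d \<and> (\<Sum>e\<in>choose_set d p. p e) \<le> fst d (choose_set d p)"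
  using assms(2) by (cases rule: choose_set_cases[OF assms(1), where p = p]) simp_all

lemma price_choose_set_le_ext_val:
  assumes "valid_decl U k d"
  shows "(\<Sum>e\<in>choose_set d p. p e) \<le> ext_val d (choose_set d p)"
proof (cases "choose_set d p = {}")
  case True
  then show ?thesis using ext_val_nonneg[OF assms] by simp
next
  case False
  note chosen = choose_set_affordable[OF assms False]
  then show ?thesis using fst_le_ext_val[OF assms conjunct1[OF chosen] subset_refl] by linarith
qed

lemma fst_le_ext_val_choose_set:
  assumes "valid_decl U k d" "S \<in> snd d" "(\<Sum>e\<in>S. p e) \<le> fst d S"
  shows "fst d S \<le> ext_val d (choose_set d p)"
proof (cases rule: choose_set_cases[OF assms(1), where p = p])
  case 1
  then show ?thesis using assms by auto
next
  case 2
  then have "fst d S \<le> fst d (choose_set d p)" using assms by blast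
  also have "\<dots> \<le> ext_val d (choose_set d p)" using 2 fst_le_ext_val[OF assms(1)] by blast
  finally show ?thesis .
qed

lemma ext_val_choose_set_verified:
  assumes vd: "valid_decl U k d" and vt: "valid_decl U k t" and "finite U"
    and q: "\<forall>e. 0 \<le> q e"
    and verified: "ext_val d (choose_set d q) \<le> ext_val t (choose_set d q)"
  shows "ext_val t (choose_set d q) \<le> ext_val t (choose_set t q)"
proof (cases "\<exists>S\<in>snd t. S \<subseteq> choose_set d q")
  case False
  then show ?thesis using ext_val_nonneg[OF vt] by (simp add: ext_val_eq_Max_image)
next
  case True
  let ?T = "choose_set d q"
  obtain S where S: "S \<in> snd t" "S \<subseteq> ?T" "ext_val t ?T = fst t S"
    using ext_val_attained[OF vt True] .
  have "S \<noteq> {}" using S vt unfolding valid_decl_def by auto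
  then have "?T \<noteq> {}" using S by auto
  note T = choose_set_affordable[OF vd this, THEN conjunct1] choose_set_affordable[OF vd this, THEN conjunct2]
  have "finite ?T" using choose_set_subset[OF vd] \<open>finite U\<close> by (rule finite_subset)
  then have "(\<Sum>e\<in>S. q e) \<le> (\<Sum>e\<in>?T. q e)" using S q by (intro sum_mono2) auto
  also have "\<dots> \<le> fst d ?T" by (rule T(2))
  also have "\<dots> \<le> ext_val d ?T" using fst_le_ext_val[OF vd T(1)] by simp
  also have "\<dots> \<le> fst t S" using verified S by simp
  finally have "fst t S \<le> ext_val t (choose_set t q)" by (rule fst_le_ext_val_choose_set[OF vt S(1)])
  then show ?thesis using S by simp
qed

section \<open>Runs of the algorithm\<close>

lemma mpu_step_price:
  "fst (mpu_step d r x st) e = (if e \<in> choose_set (d x) (fst st) then r * fst st e else fst st e)"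
  unfolding mpu_step_def Let_def by simp

lemma mpu_step_alloc: "snd (mpu_step d r x st) = (snd st)(x := choose_set (d x) (fst st))"
  unfolding mpu_step_def Let_def by simp

lemma fold_mpu_step_alloc_notin:
  "x \<notin> set xs \<Longrightarrow> snd (fold (mpu_step d r) xs st) x = snd st x"
  by (induction xs arbitrary: st) (auto simp: mpu_step_alloc)

lemma fold_mpu_step_alloc_split:
  "i \<notin> set bs \<Longrightarrow>
   snd (fold (mpu_step d r) (as @ i # bs) st) i = choose_set (d i) (fst (fold (mpu_step d r) as st))"
  by (simp add: fold_mpu_step_alloc_notin mpu_step_alloc)

lemma fold_mpu_step_cong:
  "\<forall>x\<in>set xs. d x = d' x \<Longrightarrow> fold (mpu_step d r) xs st = fold (mpu_step d' r) xs st"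
  by (induction xs arbitrary: st) (auto simp: mpu_step_def)

lemma fold_mpu_step_price_nonneg:
  "0 \<le> r \<Longrightarrow> \<forall>e. 0 \<le> fst st e \<Longrightarrow> \<forall>e. 0 \<le> fst (fold (mpu_step d r) xs st) e"
  by (induction xs arbitrary: st) (auto simp: mpu_step_price)

lemma fold_mpu_step_price_mono:
  "1 \<le> r \<Longrightarrow> \<forall>e. 0 \<le> fst st e \<Longrightarrow> fst st e \<le> fst (fold (mpu_step d r) xs st) e"
proof (induction xs arbitrary: st)
  case (Cons x xs)
  have "fst st e \<le> fst (mpu_step d r x st) e"
    using Cons.prems mult_right_mono[of 1 r "fst st e"] by (simp add: mpu_step_price)
  also have "\<dots> \<le> fst (fold (mpu_step d r) (x # xs) st) e"
    using Cons fold_mpu_step_price_nonneg[of r st d "[x]"] by simp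
  finally show ?case .
qed simp

lemma fold_mpu_step_alloc_choose_set:
  assumes "distinct xs" "i \<in> set xs" "1 \<le> r" "\<forall>e. 0 \<le> fst st e"
  obtains q where "\<forall>e. 0 \<le> q e \<and> q e \<le> fst (fold (mpu_step d r) xs st) e"
    "snd (fold (mpu_step d r) xs st) i = choose_set (d i) q"
proof -
  obtain as bs where xs: "xs = as @ i # bs" using split_list[OF assms(2)] by blast
  let ?q = "fst (fold (mpu_step d r) as st)"
  have "i \<notin> set bs" using assms(1) xs by simp
  then have "snd (fold (mpu_step d r) xs st) i = choose_set (d i) ?q"
    unfolding xs by (rule fold_mpu_step_alloc_split)
  moreover have q0: "\<forall>e. 0 \<le> ?q e" using assms fold_mpu_step_price_nonneg[of r st d as] by simp
  moreover have "?q e \<le> fst (fold (mpu_step d r) xs st) e" for e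
    using fold_mpu_step_price_mono[OF assms(3) q0, of e d "i # bs"] unfolding xs by simp
  ultimately show ?thesis using that by blast
qed

lemma sum_scale_on_subset:
  fixes r :: real and p :: "'g \<Rightarrow> real"
  assumes "finite U" "S \<subseteq> U"
  shows "(\<Sum>e\<in>U. if e \<in> S then r * p e else p e) = (\<Sum>e\<in>U. p e) + (r - 1) * (\<Sum>e\<in>S. p e)"
proof -
  have "(\<Sum>e\<in>U. if e \<in> S then r * p e else p e) = (\<Sum>e\<in>U. p e + (if e \<in> S then (r - 1) * p e else 0))"
    by (intro sum.cong) (auto simp: algebra_simps)
  also have "\<dots> = (\<Sum>e\<in>U. p e) + (\<Sum>e\<in>S. (r - 1) * p e)"
    using assms by (simp add: sum.distrib sum.If_cases Int_absorb1)
  finally show ?thesis by (simp add: sum_distrib_left)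
qed

lemma fold_mpu_step_total_price:
  assumes "finite U" "distinct xs" "\<forall>x\<in>set xs. valid_decl U k (d x)" "1 \<le> r" "\<forall>e. 0 \<le> fst st e"
  shows "(\<Sum>e\<in>U. fst (fold (mpu_step d r) xs st) e) \<le> (\<Sum>e\<in>U. fst st e)
     + (r - 1) * (\<Sum>x\<in>set xs. ext_val (d x) (snd (fold (mpu_step d r) xs st) x))"
  using assms(2-5)
proof (induction xs arbitrary: st)
  case (Cons x xs)
  let ?st' = "mpu_step d r x st"
  let ?F = "fold (mpu_step d r) xs ?st'"
  let ?S = "choose_set (d x) (fst st)"
  have vx: "valid_decl U k (d x)" using Cons.prems by simp
  have "(\<Sum>e\<in>U. fst ?st' e) = (\<Sum>e\<in>U. fst st e) + (r - 1) * (\<Sum>e\<in>?S. fst st e)"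
    unfolding mpu_step_price by (rule sum_scale_on_subset[OF assms(1) choose_set_subset[OF vx]])
  also have "\<dots> \<le> (\<Sum>e\<in>U. fst st e) + (r - 1) * ext_val (d x) ?S"
    using price_choose_set_le_ext_val[OF vx, of "fst st"] Cons.prems by (simp add: mult_left_mono)
  finally have step: "(\<Sum>e\<in>U. fst ?st' e) \<le> (\<Sum>e\<in>U. fst st e) + (r - 1) * ext_val (d x) ?S" .
  have IH: "(\<Sum>e\<in>U. fst ?F e) \<le> (\<Sum>e\<in>U. fst ?st' e) + (r - 1) * (\<Sum>y\<in>set xs. ext_val (d y) (snd ?F y))"
    using Cons.IH Cons.prems fold_mpu_step_price_nonneg[of r st d "[x]"] by simp
  have "snd ?F x = ?S" using Cons.prems by (simp add: fold_mpu_step_alloc_notin mpu_step_alloc)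
  then have sum_Cons: "(\<Sum>y\<in>set (x # xs). ext_val (d y) (snd ?F y))
      = ext_val (d x) ?S + (\<Sum>y\<in>set xs. ext_val (d y) (snd ?F y))"
    using Cons.prems by simp
  have "(\<Sum>e\<in>U. fst ?F e) \<le> (\<Sum>e\<in>U. fst st e) + (r - 1) * (\<Sum>y\<in>set (x # xs). ext_val (d y) (snd ?F y))"
    unfolding sum_Cons distrib_left using step IH by linarith
  then show ?case by simp
qed simp

definition mpu_rate :: "'g set \<Rightarrow> nat \<Rightarrow> real" where
  "mpu_rate U b = (4 * real b * real (card U)) powr (1 / real b)"

definition mpu_base_price :: "'g set \<Rightarrow> nat \<Rightarrow> real \<Rightarrow> real \<Rightarrow> real" where
  "mpu_base_price U b eps v = (1 + eps) * v / (4 * real b * real (card U))"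

definition mpu_run :: "'g set \<Rightarrow> nat \<Rightarrow> real \<Rightarrow> nat \<Rightarrow> (nat \<Rightarrow> 'g decl)
      \<Rightarrow> ('g \<Rightarrow> real) \<times> (nat \<Rightarrow> 'g set)" where
  "mpu_run U b eps n d = fold (mpu_step d (mpu_rate U b)) (proc_order n (leader n d))
     (\<lambda>_. mpu_base_price U b eps (vmax (d (leader n d))), \<lambda>_. {})"

lemma mpu_eq_snd_mpu_run: "mpu U b eps n d = snd (mpu_run U b eps n d)"
  unfolding mpu_def mpu_run_def Let_def mpu_rate_def mpu_base_price_def by simp

lemma mpu_rate_ge_1: assumes "0 < card U" "1 \<le> b" shows "1 \<le> mpu_rate U b"
proof -
  have "1 \<le> real b * real (card U)" using assms
    by (metis One_nat_def Suc_leI of_nat_1 of_nat_le_iff of_nat_mult one_le_mult_iff)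
  then show ?thesis unfolding mpu_rate_def using assms by (intro ge_one_powr_ge_zero) auto
qed

lemma mpu_rate_pow: assumes "0 < card U" "1 \<le> b" shows "mpu_rate U b ^ b = 4 * real b * real (card U)"
proof -
  have pos: "0 < 4 * real b * real (card U)" using assms by simp
  then have "0 < mpu_rate U b" unfolding mpu_rate_def by (simp only: powr_gt_zero)
  then have "mpu_rate U b ^ b = mpu_rate U b powr real b" by (simp add: powr_realpow)
  also have "\<dots> = (4 * real b * real (card U)) powr (1 / real b * real b)"
    unfolding mpu_rate_def by (simp add: powr_powr)
  also have "1 / real b * real b = 1" using assms by simp
  finally show ?thesis using pos assms by simp
qed

lemma four_mult_le_four_power: "1 \<le> b \<Longrightarrow> 4 * real b \<le> 4 ^ b"
proof (induction b rule: dec_induct)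
  case (step b)
  have "(4::real) \<le> 4 ^ b" using step(1) by (metis power_increasing power_one_right one_le_numeral)
  then show ?case using step(3) by simp
qed simp

lemma mpu_rate_le: assumes "0 < card U" "1 \<le> b"
  shows "mpu_rate U b \<le> 4 * real (card U) powr (1 / real b)"
proof -
  have "mpu_rate U b = (4 * real b) powr (1 / real b) * real (card U) powr (1 / real b)"
    unfolding mpu_rate_def using assms by (simp add: powr_mult)
  also have "(4 * real b) powr (1 / real b) \<le> (4 ^ b) powr (1 / real b)"
    using four_mult_le_four_power[OF assms(2)] assms by (intro powr_mono2) auto
  also have "(4 ^ b) powr (1 / real b) = (4::real)"
    using assms by (simp add: powr_realpow[symmetric] powr_powr)
  finally show ?thesis by (simp add: mult_right_mono)
qed

lemma mpu_base_price_nonneg: "0 \<le> v \<Longrightarrow> 0 < eps \<Longrightarrow> 0 \<le> mpu_base_price U b eps v"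
  unfolding mpu_base_price_def by simp

lemma total_base_price:
  assumes "0 < card U" "1 \<le> b"
  shows "(\<Sum>e\<in>U. mpu_base_price U b eps v) = (1 + eps) * v / (4 * real b)"
  using assms by (simp add: mpu_base_price_def field_simps)

lemma vmax_le_ext_val_choose_set_base:
  assumes vd: "valid_decl U k d" "1 \<le> k" and "finite U" "1 \<le> b" "0 < eps" "eps < 1"
  shows "vmax d \<le> ext_val d (choose_set d (\<lambda>_. mpu_base_price U b eps (vmax d)))"
proof -
  obtain S where S: "S \<in> snd d" "vmax d = fst d S" by (rule vmax_attained[OF vd])
  let ?p = "mpu_base_price U b eps (vmax d)"
  have "0 \<le> vmax d" "0 < card U" using vmax_nonneg[OF vd] card_goods_pos[OF vd \<open>finite U\<close>] .
  have "0 \<le> ?p" using \<open>0 \<le> vmax d\<close> \<open>0 < eps\<close> by (rule mpu_base_price_nonneg)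
  then have "(\<Sum>e\<in>S. ?p) \<le> (\<Sum>e\<in>U. ?p)"
    using S(1) vd \<open>finite U\<close> by (intro sum_mono2) (auto simp: valid_decl_def)
  also have "\<dots> = (1 + eps) * vmax d / (4 * real b)"
    using total_base_price[OF \<open>0 < card U\<close> \<open>1 \<le> b\<close>] .
  also have "\<dots> \<le> vmax d"
  proof -
    have "(1 + eps) * vmax d \<le> 4 * real b * vmax d"
      using \<open>0 \<le> vmax d\<close> assms by (intro mult_right_mono) auto
    then have "(1 + eps) * vmax d / (4 * real b) \<le> 4 * real b * vmax d / (4 * real b)"
      by (rule divide_right_mono) simp
    also have "\<dots> = vmax d" using assms by simp
    finally show ?thesis .
  qed
  finally show ?thesis using fst_le_ext_val_choose_set[OF vd(1) S(1)] S by simp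
qed

lemma leader_spec:
  assumes "0 < n"
  shows "leader n d < n" "\<forall>i<n. vmax (d i) \<le> vmax (d (leader n d))"
    "\<forall>i<leader n d. vmax (d i) < vmax (d (leader n d))"
proof -
  have "Max ((\<lambda>i. vmax (d i)) ` {..<n}) \<in> (\<lambda>i. vmax (d i)) ` {..<n}" using assms by (intro Max_in) auto
  then obtain j where "j < n" "vmax (d j) = Max ((\<lambda>i. vmax (d i)) ` {..<n})" by auto
  then have "\<exists>j. j < n \<and> (\<forall>i<n. vmax (d i) \<le> vmax (d j))" by auto
  then have L: "leader n d < n \<and> (\<forall>i<n. vmax (d i) \<le> vmax (d (leader n d)))"
    unfolding leader_def by (rule LeastI_ex)
  then show "leader n d < n" "\<forall>i<n. vmax (d i) \<le> vmax (d (leader n d))" by auto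
  show "\<forall>i<leader n d. vmax (d i) < vmax (d (leader n d))"
  proof (intro allI impI)
    fix i assume i: "i < leader n d"
    then have "\<not> (i < n \<and> (\<forall>i'<n. vmax (d i') \<le> vmax (d i)))"
      unfolding leader_def by (rule not_less_Least)
    then show "vmax (d i) < vmax (d (leader n d))" using i L by force
  qed
qed

lemma leader_eqI:
  assumes "j < n" "\<forall>i<n. vmax (d i) \<le> vmax (d j)" "\<forall>i<j. vmax (d i) < vmax (d j)"
  shows "leader n d = j"
  unfolding leader_def
proof (rule Least_equality)
  show "j < n \<and> (\<forall>i<n. vmax (d i) \<le> vmax (d j))" using assms by blast
next
  fix y assume "y < n \<and> (\<forall>i<n. vmax (d i) \<le> vmax (d y))"
  then show "j \<le> y" using assms by (meson leI order.strict_trans1 less_irrefl)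
qed

lemma leader_fun_upd_raise:
  assumes "0 < n" "i = leader n d" "vmax (d i) \<le> vmax t"
  shows "leader n (d(i := t)) = i"
  using leader_spec[OF assms(1), of d] assms
  by (intro leader_eqI) (auto intro: order.trans order.strict_trans2)

lemma leader_fun_upd_other:
  assumes "0 < n" "i \<noteq> leader n d" "i \<noteq> leader n (d(i := t))"
  shows "leader n (d(i := t)) = leader n d"
proof -
  let ?j = "leader n d" and ?j' = "leader n (d(i := t))"
  note L = leader_spec[OF assms(1), of d] and L' = leader_spec[OF assms(1), of "d(i := t)"]
  have "vmax (d ?j) = vmax (d ?j')" using L L' assms by (metis fun_upd_other order_antisym)
  then have "\<not> ?j < ?j'" "\<not> ?j' < ?j" using L L' assms by (metis fun_upd_other less_irrefl)+
  then show ?thesis by simp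
qed

lemma proc_order_distinct: "distinct (proc_order n j)"
  unfolding proc_order_def by simp

lemma set_proc_order: "j < n \<Longrightarrow> set (proc_order n j) = {..<n}"
  unfolding proc_order_def by auto

lemma mpu_leader_alloc:
  "mpu U b eps n d (leader n d)
     = choose_set (d (leader n d)) (\<lambda>_. mpu_base_price U b eps (vmax (d (leader n d))))"
  unfolding mpu_eq_snd_mpu_run mpu_run_def proc_order_def
  by (simp add: fold_mpu_step_alloc_notin mpu_step_alloc)

lemma vmax_le_ext_val_mpu_leader:
  assumes "0 < n" "\<forall>i<n. valid_decl U k (d i)" "1 \<le> k" "finite U" "1 \<le> b" "0 < eps" "eps < 1"
  shows "vmax (d (leader n d)) \<le> ext_val (d (leader n d)) (mpu U b eps n d (leader n d))"
  unfolding mpu_leader_alloc using assms leader_spec(1)[OF assms(1)]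
  by (intro vmax_le_ext_val_choose_set_base) auto

lemma mpu_rate_ge_1_base_price_nonneg:
  assumes "0 < n" "\<forall>i<n. valid_decl U k (d i)" "1 \<le> k" "finite U" "1 \<le> b" "0 < eps"
  shows "1 \<le> mpu_rate U b" "0 \<le> mpu_base_price U b eps (vmax (d (leader n d)))"
proof -
  have valid: "valid_decl U k (d (leader n d))" using assms(2) leader_spec(1)[OF assms(1)] by blast
  show "1 \<le> mpu_rate U b" using card_goods_pos[OF valid assms(3,4)] assms(5) by (rule mpu_rate_ge_1)
  show "0 \<le> mpu_base_price U b eps (vmax (d (leader n d)))"
    using vmax_nonneg[OF valid assms(3)] assms(6) by (rule mpu_base_price_nonneg)
qed

lemma mpu_run_price_nonneg:
  assumes "0 < n" "\<forall>i<n. valid_decl U k (d i)" "1 \<le> k" "finite U" "1 \<le> b" "0 < eps"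
  shows "\<forall>e. 0 \<le> fst (mpu_run U b eps n d) e"
  unfolding mpu_run_def
proof (rule fold_mpu_step_price_nonneg)
  show "0 \<le> mpu_rate U b" using mpu_rate_ge_1_base_price_nonneg(1)[OF assms] by simp
  show "\<forall>e. 0 \<le> fst (\<lambda>_. mpu_base_price U b eps (vmax (d (leader n d))), \<lambda>_. {}) e"
    using mpu_rate_ge_1_base_price_nonneg(2)[OF assms] by simp
qed

lemma mpu_alloc_choose_set:
  assumes "i < n" "\<forall>i<n. valid_decl U k (d i)" "1 \<le> k" "finite U" "1 \<le> b" "0 < eps"
  obtains q where "\<forall>e. 0 \<le> q e \<and> q e \<le> fst (mpu_run U b eps n d) e"
    "mpu U b eps n d i = choose_set (d i) q"
proof -
  let ?st = "(\<lambda>_::'a. mpu_base_price U b eps (vmax (d (leader n d))), \<lambda>_::nat. {} :: 'a set)"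
  have "0 < n" using assms by simp
  note params = mpu_rate_ge_1_base_price_nonneg[OF this assms(2-6)]
  have "i \<in> set (proc_order n (leader n d))"
    using assms(1) set_proc_order[OF leader_spec(1)[OF \<open>0 < n\<close>, of d]] by simp
  moreover have "\<forall>e. 0 \<le> fst ?st e" using params(2) by simp
  ultimately obtain q where "\<forall>e. 0 \<le> q e \<and> q e \<le> fst (mpu_run U b eps n d) e"
    "snd (mpu_run U b eps n d) i = choose_set (d i) q"
    unfolding mpu_run_def by (rule fold_mpu_step_alloc_choose_set[OF proc_order_distinct _ params(1)])
  then show ?thesis by (rule that[unfolded mpu_eq_snd_mpu_run])
qed

section \<open>Truthfulness\<close>

lemma mpu_nonleader_alloc:
  assumes j: "j = leader n d" "j = leader n d'" and i: "i < n" "i \<noteq> j"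
    and d': "\<forall>x. x \<noteq> i \<longrightarrow> d' x = d x"
    and valid: "\<forall>i<n. valid_decl U k (d i)" "1 \<le> k" "finite U" "1 \<le> b" "0 < eps"
  obtains q where "\<forall>e. 0 \<le> q e"
    "mpu U b eps n d i = choose_set (d i) q" "mpu U b eps n d' i = choose_set (d' i) q"
proof -
  let ?st = "(\<lambda>_::'a. mpu_base_price U b eps (vmax (d j)), \<lambda>_::nat. {} :: 'a set)"
  have "0 < n" using i by simp
  have "i \<in> set (proc_order n j)" using i j set_proc_order leader_spec(1)[OF \<open>0 < n\<close>] by blast
  then obtain as bs where po: "proc_order n j = as @ i # bs" using split_list by metis
  then have "i \<notin> set as" "i \<notin> set bs" using proc_order_distinct[of n j] by auto
  let ?q = "fst (fold (mpu_step d (mpu_rate U b)) as ?st)"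
  have "mpu U b eps n d i = choose_set (d i) ?q"
    unfolding mpu_eq_snd_mpu_run mpu_run_def j(1)[symmetric] po
    using \<open>i \<notin> set bs\<close> by (rule fold_mpu_step_alloc_split)
  moreover have "mpu U b eps n d' i = choose_set (d' i) ?q"
  proof -
    have "d' j = d j" using d' i by simp
    have "mpu U b eps n d' i = choose_set (d' i) (fst (fold (mpu_step d' (mpu_rate U b)) as ?st))"
      unfolding mpu_eq_snd_mpu_run mpu_run_def j(2)[symmetric] po \<open>d' j = d j\<close>
      using \<open>i \<notin> set bs\<close> by (rule fold_mpu_step_alloc_split)
    also have "fold (mpu_step d' (mpu_rate U b)) as ?st = fold (mpu_step d (mpu_rate U b)) as ?st"
      using \<open>i \<notin> set as\<close> d' by (intro fold_mpu_step_cong) auto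
    finally show ?thesis .
  qed
  moreover have "\<forall>e. 0 \<le> ?q e"
    using mpu_rate_ge_1_base_price_nonneg[OF \<open>0 < n\<close> valid] j(1)
    by (intro fold_mpu_step_price_nonneg) auto
  ultimately show ?thesis using that by blast
qed

lemma mpu_truthful_verif:
  assumes "finite U" "1 \<le> b" "1 \<le> k" "0 < eps" "eps < 1"
  shows "truthful_verif U k n (mpu U b eps n)"
  unfolding truthful_verif_def
proof (intro allI impI)
  fix i d t
  assume i: "i < n" and vd: "\<forall>j<n. valid_decl U k (d j)" and vt: "valid_decl U k t"
    and verified: "ext_val (d i) (mpu U b eps n d i) \<le> ext_val t (mpu U b eps n d i)"
  let ?d' = "d(i := t)"
  have "0 < n" using i by simp
  have vd_upd: "\<forall>j<n. valid_decl U k (?d' j)" using vd vt by simp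
  note leader_value = vmax_le_ext_val_mpu_leader[OF \<open>0 < n\<close> _ \<open>1 \<le> k\<close> \<open>finite U\<close> \<open>1 \<le> b\<close> \<open>0 < eps\<close> \<open>eps < 1\<close>]
  show "ext_val t (mpu U b eps n d i) \<le> ext_val t (mpu U b eps n ?d' i)"
  proof (cases "i = leader n ?d'")
    case True
    have "ext_val t (mpu U b eps n d i) \<le> vmax t" using ext_val_le_vmax[OF vt \<open>1 \<le> k\<close>] .
    also have "\<dots> \<le> ext_val t (mpu U b eps n ?d' i)"
      using leader_value[where d = "d(i := t)", OF vd_upd] unfolding True[symmetric] by simp
    finally show ?thesis .
  next
    case False
    have "i \<noteq> leader n d"
    proof
      assume leader: "i = leader n d"
      have "vmax (d i) \<le> ext_val (d i) (mpu U b eps n d i)" using leader_value[OF vd] unfolding leader .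
      also have "\<dots> \<le> vmax t" using verified ext_val_le_vmax[OF vt \<open>1 \<le> k\<close>] by (rule order.trans)
      finally have "leader n ?d' = i" by (rule leader_fun_upd_raise[OF \<open>0 < n\<close> leader])
      then show False using False by simp
    qed
    then have "leader n ?d' = leader n d" using False by (intro leader_fun_upd_other[OF \<open>0 < n\<close>])
    then obtain q where "\<forall>e. 0 \<le> q e"
      "mpu U b eps n d i = choose_set (d i) q" "mpu U b eps n ?d' i = choose_set t q"
      using mpu_nonleader_alloc[OF refl _ i \<open>i \<noteq> leader n d\<close> _ vd \<open>1 \<le> k\<close> \<open>finite U\<close> \<open>1 \<le> b\<close> \<open>0 < eps\<close>, of ?d']
      by auto
    then show ?thesis using verified ext_val_choose_set_verified[OF vd[rule_format, OF i] vt \<open>finite U\<close>] by simp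
  qed
qed

section \<open>Feasibility\<close>

definition prices_track_alloc :: "real \<Rightarrow> real \<Rightarrow> nat \<Rightarrow> nat set
      \<Rightarrow> ('g \<Rightarrow> real) \<times> (nat \<Rightarrow> 'g set) \<Rightarrow> bool" where
  "prices_track_alloc p0 r b D st \<longleftrightarrow>
     (\<forall>e. fst st e = p0 * r ^ card {i\<in>D. e \<in> snd st i} \<and> card {i\<in>D. e \<in> snd st i} \<le> b)"

lemma prices_track_alloc_mpu_step:
  assumes "finite D" "x \<notin> D" and inv: "prices_track_alloc p0 r b D st" and "0 < r" "0 \<le> p0"
    and mu: "p0 * r ^ b = mu" and vx: "valid_decl U k (d x)" and "finite U"
    and below: "\<forall>S\<in>snd (d x). fst (d x) S < mu"
  shows "prices_track_alloc p0 r b (insert x D) (mpu_step d r x st)"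
  unfolding prices_track_alloc_def
proof
  fix e
  let ?S = "choose_set (d x) (fst st)"
  let ?C = "{i\<in>D. e \<in> snd st i}"
  have count: "card {i\<in>insert x D. e \<in> snd (mpu_step d r x st) i} = (if e \<in> ?S then Suc (card ?C) else card ?C)"
  proof -
    have "{i\<in>insert x D. e \<in> snd (mpu_step d r x st) i} = (if e \<in> ?S then insert x ?C else ?C)"
      using \<open>x \<notin> D\<close> by (auto simp: mpu_step_alloc)
    then show ?thesis using \<open>finite D\<close> \<open>x \<notin> D\<close> by simp
  qed
  have price: "fst st e = p0 * r ^ card ?C" and "card ?C \<le> b" using inv unfolding prices_track_alloc_def by auto
  have "card ?C < b" if "e \<in> ?S"
  proof (rule ccontr)
    assume "\<not> card ?C < b"
    then have "fst st e = mu" using price \<open>card ?C \<le> b\<close> mu by simp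
    have "?S \<noteq> {}" using that by auto
    note chosen = choose_set_affordable[OF vx this]
    have "\<forall>e'. 0 \<le> fst st e'" using inv \<open>0 < r\<close> \<open>0 \<le> p0\<close> unfolding prices_track_alloc_def by simp
    moreover have "finite ?S" using choose_set_subset[OF vx] \<open>finite U\<close> by (rule finite_subset)
    ultimately have "fst st e \<le> (\<Sum>e'\<in>?S. fst st e')" using that by (intro member_le_sum) auto
    then have "mu \<le> fst (d x) ?S" using \<open>fst st e = mu\<close> chosen by linarith
    then show False using below chosen by fastforce
  qed
  then show "fst (mpu_step d r x st) e = p0 * r ^ card {i\<in>insert x D. e \<in> snd (mpu_step d r x st) i} \<and>
        card {i\<in>insert x D. e \<in> snd (mpu_step d r x st) i} \<le> b"
    unfolding count mpu_step_price using price \<open>card ?C \<le> b\<close> by auto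
qed

lemma prices_track_alloc_fold:
  assumes "distinct xs" "set xs \<inter> D = {}" "finite D" "prices_track_alloc p0 r b D st" "0 < r" "0 \<le> p0"
    "p0 * r ^ b = mu" "finite U" "\<forall>x\<in>set xs. valid_decl U k (d x) \<and> (\<forall>S\<in>snd (d x). fst (d x) S < mu)"
  shows "prices_track_alloc p0 r b (D \<union> set xs) (fold (mpu_step d r) xs st)"
  using assms
proof (induction xs arbitrary: D st)
  case (Cons x xs)
  have "prices_track_alloc p0 r b (insert x D) (mpu_step d r x st)"
    using Cons.prems by (intro prices_track_alloc_mpu_step[where U = U and k = k and mu = mu]) auto
  then have "prices_track_alloc p0 r b (insert x D \<union> set xs) (fold (mpu_step d r) xs (mpu_step d r x st))"
    using Cons.prems by (intro Cons.IH) auto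
  then show ?case by simp
qed simp

text \<open>Without a positive declared value every price is zero and demands are unconstrained.\<close>

lemma mpu_feasible_alloc:
  assumes "finite U" "1 \<le> b" "1 \<le> k" "0 < eps"
    and vd: "\<forall>i<n. valid_decl U k (d i)" and pos: "\<exists>i<n. 0 < vmax (d i)"
  shows "feasible_alloc U b n (mpu U b eps n d)"
proof -
  have "0 < n" using pos by auto
  define j where "j = leader n d"
  note L = leader_spec[OF \<open>0 < n\<close>, of d, folded j_def]
  have "0 < card U" using card_goods_pos vd L(1) assms by blast
  define v where "v = vmax (d j)"
  define p0 where "p0 = mpu_base_price U b eps v"
  define r where "r = mpu_rate U b"
  have "0 < v" using L(2) pos unfolding v_def by force
  have "0 < r" using mpu_rate_ge_1[OF \<open>0 < card U\<close> \<open>1 \<le> b\<close>] unfolding r_def by simp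
  have "0 \<le> p0" unfolding p0_def using \<open>0 < v\<close> \<open>0 < eps\<close> by (simp add: mpu_base_price_nonneg)
  have mu: "p0 * r ^ b = (1 + eps) * v"
    unfolding r_def mpu_rate_pow[OF \<open>0 < card U\<close> \<open>1 \<le> b\<close>] p0_def mpu_base_price_def
    using \<open>0 < card U\<close> \<open>1 \<le> b\<close> by simp
  have below: "fst (d x) S < (1 + eps) * v" if "x < n" "S \<in> snd (d x)" for x S
  proof -
    have "fst (d x) S \<le> vmax (d x)" using fst_le_vmax vd that by blast
    also have "\<dots> \<le> v" using L(2) that unfolding v_def by simp
    also have "\<dots> < (1 + eps) * v" using \<open>0 < v\<close> \<open>0 < eps\<close> by simp
    finally show ?thesis .
  qed
  have "prices_track_alloc p0 r b {} (\<lambda>_. p0, \<lambda>_. {})" unfolding prices_track_alloc_def by simp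
  then have "prices_track_alloc p0 r b ({} \<union> set (proc_order n j)) (mpu_run U b eps n d)"
    unfolding mpu_run_def j_def[symmetric] v_def[symmetric] p0_def[symmetric] r_def[symmetric]
    using proc_order_distinct set_proc_order[OF L(1)] vd below \<open>0 < r\<close> \<open>0 \<le> p0\<close> mu \<open>finite U\<close>
    by (intro prices_track_alloc_fold) auto
  then have "card {i. i < n \<and> e \<in> mpu U b eps n d i} \<le> b" for e
    unfolding prices_track_alloc_def mpu_eq_snd_mpu_run set_proc_order[OF L(1)] by (simp add: lessThan_def)
  moreover have "mpu U b eps n d i \<subseteq> U" if "i < n" for i
    using mpu_alloc_choose_set[OF that vd \<open>1 \<le> k\<close> \<open>finite U\<close> \<open>1 \<le> b\<close> \<open>0 < eps\<close>]
      choose_set_subset vd that by metis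
  ultimately show ?thesis unfolding feasible_alloc_def by blast
qed

section \<open>Approximation ratio\<close>

lemma ext_val_le_ext_val_choose_set_plus_price:
  assumes vt: "valid_decl U k t" and "finite U" "X \<subseteq> U"
    and q: "\<forall>e. 0 \<le> q e \<and> q e \<le> ps e"
  shows "ext_val t X \<le> ext_val t (choose_set t q) + (\<Sum>e\<in>X. ps e)"
proof -
  have "finite X" using \<open>X \<subseteq> U\<close> \<open>finite U\<close> by (rule finite_subset)
  have "0 \<le> (\<Sum>e\<in>X. ps e)" using q by (intro sum_nonneg) (meson order.trans)
  have "0 \<le> ext_val t (choose_set t q)" by (rule ext_val_nonneg[OF vt])
  show ?thesis
  proof (cases "\<exists>S\<in>snd t. S \<subseteq> X")
    case False
    then show ?thesis using \<open>0 \<le> (\<Sum>e\<in>X. ps e)\<close> \<open>0 \<le> ext_val t (choose_set t q)\<close>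
      by (simp add: ext_val_eq_Max_image)
  next
    case True
    then obtain S where S: "S \<in> snd t" "S \<subseteq> X" "ext_val t X = fst t S"
      by (rule ext_val_attained[OF vt])
    show ?thesis
    proof (cases "(\<Sum>e\<in>S. q e) \<le> fst t S")
      case True
      then show ?thesis using fst_le_ext_val_choose_set[OF vt S(1) True] S \<open>0 \<le> (\<Sum>e\<in>X. ps e)\<close> by simp
    next
      case False
      have "(\<Sum>e\<in>S. q e) \<le> (\<Sum>e\<in>S. ps e)" using q by (intro sum_mono) auto
      also have "\<dots> \<le> (\<Sum>e\<in>X. ps e)" using \<open>finite X\<close> S q by (intro sum_mono2) (auto intro: order.trans)
      finally show ?thesis using False S \<open>0 \<le> ext_val t (choose_set t q)\<close> by simp
    qed
  qed
qed

lemma sum_sum_alloc_le_at_most_b: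
  fixes ps :: "'g \<Rightarrow> real"
  assumes "finite U" and X: "feasible_alloc U b n X" and ps: "\<forall>e. 0 \<le> ps e"
  shows "(\<Sum>i<n. \<Sum>e\<in>X i. ps e) \<le> real b * (\<Sum>e\<in>U. ps e)"
proof -
  have sub: "\<forall>i<n. X i \<subseteq> U" and at_most_b: "\<forall>e. card {i. i < n \<and> e \<in> X i} \<le> b"
    using X unfolding feasible_alloc_def by auto
  have "(\<Sum>i<n. \<Sum>e\<in>X i. ps e) = (\<Sum>i<n. \<Sum>e\<in>U. if e \<in> X i then ps e else 0)"
  proof (rule sum.cong[OF refl])
    fix i assume "i \<in> {..<n}"
    then have "X i \<subseteq> U" using sub by simp
    then show "(\<Sum>e\<in>X i. ps e) = (\<Sum>e\<in>U. if e \<in> X i then ps e else 0)"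
      using \<open>finite U\<close> by (simp add: sum.If_cases Int_absorb1)
  qed
  also have "\<dots> = (\<Sum>e\<in>U. \<Sum>i<n. if e \<in> X i then ps e else 0)" by (rule sum.swap)
  also have "\<dots> = (\<Sum>e\<in>U. real (card {i. i < n \<and> e \<in> X i}) * ps e)"
  proof (rule sum.cong[OF refl])
    fix e
    have "{..<n} \<inter> {i. e \<in> X i} = {i. i < n \<and> e \<in> X i}" by auto
    then show "(\<Sum>i<n. if e \<in> X i then ps e else 0) = real (card {i. i < n \<and> e \<in> X i}) * ps e"
      by (simp add: sum.If_cases)
  qed
  also have "\<dots> \<le> (\<Sum>e\<in>U. real b * ps e)"
    using at_most_b ps by (intro sum_mono mult_right_mono) auto
  finally show ?thesis by (simp add: sum_distrib_left)
qed

lemma welfare_le_welfare_plus_prices: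
  assumes "finite U" "feasible_alloc U b n X" "\<forall>i<n. valid_decl U k (t i)" "\<forall>e. 0 \<le> ps e"
    and served: "\<forall>i<n. \<exists>q. (\<forall>e. 0 \<le> q e \<and> q e \<le> ps e) \<and> A i = choose_set (t i) q"
  shows "welfare n t X \<le> welfare n t A + real b * (\<Sum>e\<in>U. ps e)"
proof -
  have "ext_val (t i) (X i) \<le> ext_val (t i) (A i) + (\<Sum>e\<in>X i. ps e)" if i: "i < n" for i
  proof -
    obtain q where q: "\<forall>e. 0 \<le> q e \<and> q e \<le> ps e" and "A i = choose_set (t i) q"
      using served i by blast
    moreover have "X i \<subseteq> U" using assms(2) i unfolding feasible_alloc_def by simp
    ultimately show ?thesis
      using ext_val_le_ext_val_choose_set_plus_price[OF assms(3)[rule_format, OF i] \<open>finite U\<close> _ q] by simp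
  qed
  then have "welfare n t X \<le> (\<Sum>i<n. ext_val (t i) (A i) + (\<Sum>e\<in>X i. ps e))"
    unfolding welfare_def by (intro sum_mono) auto
  also have "\<dots> = welfare n t A + (\<Sum>i<n. \<Sum>e\<in>X i. ps e)" by (simp add: sum.distrib welfare_def)
  also have "\<dots> \<le> welfare n t A + real b * (\<Sum>e\<in>U. ps e)"
    using sum_sum_alloc_le_at_most_b assms(1,2,4) by (simp add: sum_sum_alloc_le_at_most_b)
  finally show ?thesis .
qed

lemma mpu_total_price_le:
  assumes "0 < n" "\<forall>i<n. valid_decl U k (t i)" "1 \<le> k" "finite U" "1 \<le> b" "0 < eps"
  shows "(\<Sum>e\<in>U. fst (mpu_run U b eps n t) e)
    \<le> (1 + eps) * vmax (t (leader n t)) / (4 * real b) + (mpu_rate U b - 1) * welfare n t (mpu U b eps n t)"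
proof -
  note params = mpu_rate_ge_1_base_price_nonneg[OF assms]
  have "0 < card U" using card_goods_pos assms leader_spec(1)[OF assms(1), of t] by blast
  have set_po: "set (proc_order n (leader n t)) = {..<n}" by (rule set_proc_order[OF leader_spec(1)[OF assms(1)]])
  then have valid: "\<forall>x\<in>set (proc_order n (leader n t)). valid_decl U k (t x)" using assms(2) by simp
  let ?st = "(\<lambda>_::'a. mpu_base_price U b eps (vmax (t (leader n t))), \<lambda>_::nat. {} :: 'a set)"
  have "(\<Sum>e\<in>U. fst (mpu_run U b eps n t) e)
    \<le> (\<Sum>e\<in>U. fst ?st e)
       + (mpu_rate U b - 1) * (\<Sum>i\<in>set (proc_order n (leader n t)). ext_val (t i) (snd (mpu_run U b eps n t) i))"
    unfolding mpu_run_def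
    by (rule fold_mpu_step_total_price[OF assms(4) proc_order_distinct valid params(1)]) (simp add: params(2))
  also have "(\<Sum>e\<in>U. fst ?st e) = (1 + eps) * vmax (t (leader n t)) / (4 * real b)"
    using total_base_price[OF \<open>0 < card U\<close> \<open>1 \<le> b\<close>] by simp
  finally show ?thesis unfolding set_po welfare_def mpu_eq_snd_mpu_run .
qed

lemma welfare_bound_arith:
  fixes opt alg P v r M eps :: real
  assumes opt: "opt \<le> alg + real b * P" and P: "P \<le> (1 + eps) * v / (4 * real b) + (r - 1) * alg"
    and "0 \<le> v" "v \<le> alg" "eps \<le> 1" "r \<le> 4 * M" "1 \<le> M" "1 \<le> b"
  shows "opt \<le> 5 * real b * M * alg"
proof -
  have "0 \<le> alg" using \<open>0 \<le> v\<close> \<open>v \<le> alg\<close> by linarith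
  have "real b * P \<le> real b * ((1 + eps) * v / (4 * real b) + (r - 1) * alg)"
    using P by (intro mult_left_mono) auto
  also have "\<dots> = (1 + eps) * v / 4 + real b * (r - 1) * alg"
    using \<open>1 \<le> b\<close> by (simp add: field_simps)
  also have "(1 + eps) * v / 4 \<le> alg / 2"
  proof -
    have "(1 + eps) * v \<le> 2 * v" using mult_right_mono[of "1 + eps" 2 v] assms by simp
    then show ?thesis using \<open>v \<le> alg\<close> by linarith
  qed
  also have "real b * (r - 1) * alg \<le> real b * (4 * M - 1) * alg"
    using assms \<open>0 \<le> alg\<close> by (intro mult_right_mono mult_left_mono) auto
  also have "real b * (4 * M - 1) * alg = 4 * (real b * M * alg) - real b * alg"
    by (simp add: algebra_simps)
  finally have "real b * P \<le> alg / 2 + (4 * (real b * M * alg) - real b * alg)" by simp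
  moreover have "alg \<le> real b * alg"
    using mult_right_mono[of 1 "real b" alg] \<open>0 \<le> alg\<close> \<open>1 \<le> b\<close> by simp
  moreover have "alg \<le> real b * M * alg"
  proof -
    have "1 * 1 \<le> real b * M" using \<open>1 \<le> b\<close> \<open>1 \<le> M\<close> by (intro mult_mono) auto
    then show ?thesis using mult_right_mono[of 1 "real b * M" alg] \<open>0 \<le> alg\<close> by simp
  qed
  ultimately have "opt \<le> 5 * (real b * M * alg)" using opt \<open>0 \<le> alg\<close> by linarith
  then show ?thesis by (simp add: mult.assoc)
qed

lemma mpu_welfare_approx:
  assumes "finite U" "1 \<le> b" "1 \<le> k" "0 < eps" "eps < 1"
    and vt: "\<forall>i<n. valid_decl U k (t i)" and X: "feasible_alloc U b n X"
  shows "welfare n t X \<le> 5 * real b * real (card U) powr (1 / real b) * welfare n t (mpu U b eps n t)"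
proof (cases "n = 0")
  case True
  then show ?thesis by (simp add: welfare_def)
next
  case False
  then have "0 < n" by simp
  let ?alg = "welfare n t (mpu U b eps n t)" and ?j = "leader n t"
  have "0 < card U" using card_goods_pos vt leader_spec(1)[OF \<open>0 < n\<close>, of t] assms by blast
  have "vmax (t ?j) \<le> ext_val (t ?j) (mpu U b eps n t ?j)"
    using vmax_le_ext_val_mpu_leader[OF \<open>0 < n\<close> vt] assms by blast
  also have "\<dots> \<le> ?alg" unfolding welfare_def
    using leader_spec(1)[OF \<open>0 < n\<close>] vt by (intro member_le_sum) (auto intro: ext_val_nonneg)
  finally have "vmax (t ?j) \<le> ?alg" .
  have served: "\<exists>q. (\<forall>e. 0 \<le> q e \<and> q e \<le> fst (mpu_run U b eps n t) e)
      \<and> mpu U b eps n t i = choose_set (t i) q" if i: "i < n" for i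
  proof -
    obtain q where "\<forall>e. 0 \<le> q e \<and> q e \<le> fst (mpu_run U b eps n t) e" "mpu U b eps n t i = choose_set (t i) q"
      by (rule mpu_alloc_choose_set[OF i vt \<open>1 \<le> k\<close> \<open>finite U\<close> \<open>1 \<le> b\<close> \<open>0 < eps\<close>])
    then show ?thesis by blast
  qed
  show ?thesis
  proof (rule welfare_bound_arith)
    show "welfare n t X \<le> ?alg + real b * (\<Sum>e\<in>U. fst (mpu_run U b eps n t) e)"
      using served mpu_run_price_nonneg[OF \<open>0 < n\<close> vt \<open>1 \<le> k\<close> \<open>finite U\<close> \<open>1 \<le> b\<close> \<open>0 < eps\<close>]
      by (intro welfare_le_welfare_plus_prices[OF \<open>finite U\<close> X vt]) auto
    show "(\<Sum>e\<in>U. fst (mpu_run U b eps n t) e)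
      \<le> (1 + eps) * vmax (t ?j) / (4 * real b) + (mpu_rate U b - 1) * ?alg"
      using mpu_total_price_le[OF \<open>0 < n\<close> vt \<open>1 \<le> k\<close> \<open>finite U\<close> \<open>1 \<le> b\<close> \<open>0 < eps\<close>] .
    show "mpu_rate U b \<le> 4 * real (card U) powr (1 / real b)"
      using mpu_rate_le[OF \<open>0 < card U\<close> \<open>1 \<le> b\<close>] .
    show "1 \<le> real (card U) powr (1 / real b)" using \<open>0 < card U\<close> by (intro ge_one_powr_ge_zero) auto
  qed (use \<open>vmax (t ?j) \<le> ?alg\<close> vmax_nonneg[OF vt[rule_format, OF leader_spec(1)[OF \<open>0 < n\<close>]] \<open>1 \<le> k\<close>]
      \<open>eps < 1\<close> \<open>1 \<le> b\<close> in auto)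
qed

theorem theorem5:
  shows "(\<forall>(U :: 'g set) b k n eps.
            finite U \<and> b \<ge> 1 \<and> k \<ge> 1 \<and> 0 < eps \<and> eps < 1 \<longrightarrow>
              truthful_verif U k n (mpu U b eps n) \<and>
              (\<forall>d. (\<forall>i<n. valid_decl U k (d i)) \<and> (\<exists>i<n. vmax (d i) > 0) \<longrightarrow>
                   feasible_alloc U b n (mpu U b eps n d)))
       \<and> (\<exists>C > 0. \<forall>(U :: 'g set) b k n eps t.
            finite U \<and> b \<ge> 1 \<and> k \<ge> 1 \<and> 0 < eps \<and> eps < 1 \<and>
            (\<forall>i<n. valid_decl U k (t i)) \<longrightarrow>
              (\<forall>X. feasible_alloc U b n X \<longrightarrow>
                 welfare n t X \<le> C * real b * real (card U) powr (1 / real b)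
                                   * welfare n t (mpu U b eps n t)))"
  by (intro conjI exI[where x = "5 :: real"] allI impI)
    (auto intro: mpu_truthful_verif mpu_feasible_alloc mpu_welfare_approx)

end
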